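(* Let $\langle S_1\rangle$ be a good simplex and let $\langle S'\rangle$ be a codimension-one face of $\langle S_1\rangle$ which is not a face of $\Delta_0$. Then $\langle S'\rangle$ is a face of exactly one other good simplex $\langle S_2\rangle$, and $\langle S_1\rangle\cap\langle S_2\rangle=\langle S_1\cap S_2\rangle$.
   Context: Let $k\ge2$, $n=2k-1$, $e_1,\dots,e_k$ the standard basis of $\mathbb R^k$, $r_{(k)}=(r,\dots,r)\in\mathbb R^k$. In $\mathbb R^{2k}$ set $A_j=(e_j,0_{(k)})$, $B_j=\frac1{2n}(2_{(k)}-e_j,2_{(k)}-e_j)$, $C_j=(0_{(k)},e_j)$ for $j=1,\dots,k$; $A,B,C$ the corresponding $k$-element sets and $X=A\cup B\cup C$. $\langle\cdot\rangle$ denotes convex hull. $\Delta_0=\langle A\cup C\rangle$ is the standard simplex. A $2k$-element subset $S\subset X$ is good if it contains no set $\{A_j,B_j,C_j\}$ and $S\ne A\cup C$; a good simplex is $\langle S\rangle$ for a good set $S$ (these are $n$-simplices since good sets are bases of $\mathbb R^{2k}$). *)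

theory Defs
  imports "HOL-Analysis.Analysis"
begin

text \<open>Points of R^(2k) are modelled as pairs in (R^k) x (R^k); the index type 'k has
  CARD('k) = k elements. n = 2k - 1.\<close>

type_synonym 'k pt = "(real^'k) \<times> (real^'k)"

definition Apt :: "'k::finite \<Rightarrow> 'k pt" where
  "Apt j = (axis j 1, 0)"

definition Bpt :: "'k::finite \<Rightarrow> 'k pt" where
  "Bpt j = (1 / (2 * (2 * real CARD('k) - 1))) *\<^sub>R
            ((\<chi> i. 2) - axis j 1, (\<chi> i. 2) - axis j 1)"

definition Cpt :: "'k::finite \<Rightarrow> 'k pt" where
  "Cpt j = (0, axis j 1)"

definition Xset :: "'k::finite pt set" where
  "Xset = range Apt \<union> range Bpt \<union> range Cpt"

definition Delta0 :: "'k::finite pt set" where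
  "Delta0 = convex hull (range Apt \<union> range Cpt)"

definition good :: "'k::finite pt set \<Rightarrow> bool" where
  "good S \<longleftrightarrow> S \<subseteq> Xset \<and> card S = 2 * CARD('k)
     \<and> (\<forall>j. \<not> {Apt j, Bpt j, Cpt j} \<subseteq> S)
     \<and> S \<noteq> range Apt \<union> range Cpt"

end

theory Submission
  imports Defs
begin

text \<open>A good set meets every triple \<open>{A\<^sub>j, B\<^sub>j, C\<^sub>j}\<close> in exactly two points. If a linear
  functional vanishes on it and has coordinate sum \<open>\<sigma>\<close>, then its value at \<open>B\<^sub>j\<close> forces the two
  coordinates of index \<open>j\<close> to add up to \<open>2\<sigma>\<close> or \<open>0\<close>, so \<open>\<sigma> = 2\<sigma>m\<close> with \<open>m\<close> an integer, whence
  \<open>\<sigma> = 0\<close> and the functional is \<open>0\<close>: good sets are bases and good simplices are genuine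
  simplices. A codimension-one face is therefore \<open>\<langle>S - {p}\<rangle>\<close>, and the only other good set
  containing \<open>S - {p}\<close> replaces \<open>p\<close> by the point \<open>q\<close> missing from the triple of \<open>p\<close>. Finally,
  an explicit functional vanishing on \<open>S - {p}\<close> takes opposite signs at \<open>p\<close> and \<open>q\<close>, so the two
  simplices lie on opposite sides of their common facet. When \<open>p\<close> and \<open>q\<close> are \<open>A\<^sub>j\<close> and \<open>C\<^sub>j\<close>
  this is immediate; otherwise the sign argument needs a point \<open>B\<^sub>i\<close>, \<open>i \<noteq> j\<close>, in \<open>S - {p}\<close>,
  which is exactly what "not a face of \<open>\<Delta>\<^sub>0\<close>" provides.\<close>

lemma convex_hull_insert_Int_convex_hull_insert_subset:
  fixes p q :: "'a::real_inner"
  assumes T: "\<forall>x\<in>T. inner w x = 0" and pq: "inner w p * inner w q < 0"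
  shows "convex hull (insert p T) \<inter> convex hull (insert q T) \<subseteq> convex hull T"
proof (cases "T = {}")
  case True
  have "p \<noteq> q"
  proof
    assume "p = q"
    then show False
      using pq not_square_less_zero[of "inner w p"] by simp
  qed
  then show ?thesis
    using True by auto
next
  case False
  have "convex hull T \<subseteq> {x. inner w x = 0}"
    using T by (intro hull_minimal) (auto simp: convex_hyperplane)
  then have hull_T: "inner w b = 0" if "b \<in> convex hull T" for b
    using that by blast
  have "inner w p \<noteq> 0"
    using pq by auto
  then have p_sq: "inner w p * inner w p > 0"
    by (simp add: zero_less_mult_iff linorder_neq_iff disj_commute)
  show ?thesis
  proof
    fix x
    assume "x \<in> convex hull (insert p T) \<inter> convex hull (insert q T)"
    then obtain u v b u' v' b' where x:
      "u \<ge> 0" "v \<ge> 0" "u + v = 1" "b \<in> convex hull T" "x = u *\<^sub>R p + v *\<^sub>R b"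
      "u' \<ge> 0" "v' \<ge> 0" "u' + v' = 1" "b' \<in> convex hull T" "x = u' *\<^sub>R q + v' *\<^sub>R b'"
      unfolding convex_hull_insert[OF False] by blast
    have "inner w x = u * inner w p"
      using x(4,5) hull_T by (simp add: inner_add_right)
    moreover have "inner w x = u' * inner w q"
      using x(9,10) hull_T by (simp add: inner_add_right)
    ultimately have "u * (inner w p * inner w p) = u' * (inner w p * inner w q)"
      by (simp add: algebra_simps)
    also have "\<dots> \<le> 0"
      using x(6) pq by (simp add: mult_nonneg_nonpos)
    finally have "u \<le> 0"
      using p_sq by (meson mult_pos_pos not_le)
    then have "u = 0"
      using x(1) by simp
    then show "x \<in> convex hull T"
      using x by simp
  qed
qed

lemma affine_independent_eq_if_convex_hull_eq:
  fixes S T :: "'a::euclidean_space set"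
  assumes "\<not> affine_dependent S" "\<not> affine_dependent T" "convex hull S = convex hull T"
  shows "S = T"
proof -
  have "x \<in> S \<longleftrightarrow> x \<in> T" for x
    using extreme_point_of_convex_hull_affine_independent[OF assms(1), of x]
      extreme_point_of_convex_hull_affine_independent[OF assms(2), of x] assms(3) by simp
  then show ?thesis
    by blast
qed

lemma face_of_convex_hull_affine_independent_codim_one:
  fixes S :: "'a::euclidean_space set"
  assumes S: "\<not> affine_dependent S" and F: "F face_of convex hull S"
    and dim: "aff_dim F = int (card S) - 2"
  obtains p where "p \<in> S" "F = convex hull (S - {p})"
proof (cases "F = {}")
  case True
  then have "card S = 1"
    using dim by simp
  then obtain p where "S = {p}"
    by (rule card_1_singletonE)
  then show ?thesis
    using that True by simp
next
  case False
  have "aff_dim (convex hull S) = int (card S) - 1"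
    using S by (simp add: aff_dim_convex_hull aff_dim_affine_independent)
  then have "F facet_of convex hull S"
    using F False dim by (simp add: facet_of_def)
  then show ?thesis
    using that facet_of_convex_hull_affine_independent[OF S] by blast
qed

lemma Bpt_denominator_pos: "2 * (2 * real CARD('k::finite) - 1) > 0"
proof -
  have "1 \<le> real CARD('k)"
    by (simp add: Suc_le_eq)
  then have "0 < 2 * real CARD('k) - 1"
    by linarith
  then show ?thesis
    by simp
qed

lemma inner_Apt: "inner (\<alpha>, \<gamma>) (Apt j) = \<alpha> $ j"
  by (simp add: Apt_def inner_axis)

lemma inner_Cpt: "inner (\<alpha>, \<gamma>) (Cpt j) = \<gamma> $ j"
  by (simp add: Cpt_def inner_axis)

lemma inner_Bpt:
  fixes \<alpha> \<gamma> :: "real^'k::finite"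
  shows "inner (\<alpha>, \<gamma>) (Bpt j) =
    (2 * ((\<Sum>i\<in>UNIV. \<alpha> $ i) + (\<Sum>i\<in>UNIV. \<gamma> $ i)) - \<alpha> $ j - \<gamma> $ j) / (2 * (2 * real CARD('k) - 1))"
proof -
  have "inner v (\<chi> i. 2) = 2 * (\<Sum>i\<in>UNIV. v $ i)" for v :: "real^'k"
    by (simp add: inner_vec_def sum_distrib_left mult.commute)
  then show ?thesis
    by (simp add: Bpt_def inner_diff_right inner_axis diff_divide_distrib add_divide_distrib)
qed

lemma points_distinct [simp]:
  fixes i j :: "'k::finite"
  shows "Apt i \<noteq> Bpt j" "Bpt j \<noteq> Apt i" "Apt i \<noteq> Cpt j" "Cpt j \<noteq> Apt i"
    "Bpt i \<noteq> Cpt j" "Cpt j \<noteq> Bpt i"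
proof -
  have "inner (0, axis i 1) (Bpt j) > 0" "inner (axis j 1, 0) (Bpt i) > 0"
    using Bpt_denominator_pos[where 'k='k] by (auto simp: inner_Bpt axis_def)
  then show "Apt i \<noteq> Bpt j" "Bpt j \<noteq> Apt i" "Bpt i \<noteq> Cpt j" "Cpt j \<noteq> Bpt i"
    by (metis inner_Apt inner_Cpt zero_index less_irrefl)+
  show "Apt i \<noteq> Cpt j" "Cpt j \<noteq> Apt i"
    using inner_Apt[of "axis i 1" 0 i] inner_Cpt[of "axis i 1" 0 j] by auto
qed

lemma points_eq_iff [simp]:
  fixes i j :: "'k::finite"
  shows "Apt i = Apt j \<longleftrightarrow> i = j" "Bpt i = Bpt j \<longleftrightarrow> i = j" "Cpt i = Cpt j \<longleftrightarrow> i = j"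
proof -
  have "inner (axis i 1, 0) (Bpt i) \<noteq> inner (axis i 1, 0) (Bpt j)" if "i \<noteq> j"
    using that Bpt_denominator_pos[where 'k='k] by (auto simp: inner_Bpt axis_def)
  then show "Bpt i = Bpt j \<longleftrightarrow> i = j"
    by metis
  show "Apt i = Apt j \<longleftrightarrow> i = j" "Cpt i = Cpt j \<longleftrightarrow> i = j"
    by (auto simp: Apt_def Cpt_def axis_eq_axis)
qed

definition triple :: "'k::finite \<Rightarrow> 'k pt set" where
  "triple j = {Apt j, Bpt j, Cpt j}"

lemma Xset_eq_UN_triple: "Xset = (\<Union>j. triple j)"
  by (auto simp: Xset_def triple_def)

lemma finite_Xset: "finite Xset"
  by (simp add: Xset_def)

lemma triple_disjoint: "i \<noteq> j \<Longrightarrow> triple i \<inter> triple j = {}"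
  by (auto simp: triple_def)

lemma card_Int_triple_eq_2_iff:
  "card (S \<inter> triple j) = 2 \<longleftrightarrow>
     (Apt j \<notin> S \<and> Bpt j \<in> S \<and> Cpt j \<in> S) \<or> (Apt j \<in> S \<and> Bpt j \<notin> S \<and> Cpt j \<in> S)
     \<or> (Apt j \<in> S \<and> Bpt j \<in> S \<and> Cpt j \<notin> S)"
  by (cases "Apt j \<in> S"; cases "Bpt j \<in> S"; cases "Cpt j \<in> S")
    (simp_all add: triple_def Int_insert_right)

lemma card_subset_Xset:
  assumes "S \<subseteq> Xset"
  shows "card S = (\<Sum>j\<in>UNIV. card (S \<inter> triple j))"
proof -
  have "S = (\<Union>j. S \<inter> triple j)"
    using assms by (auto simp: Xset_eq_UN_triple)
  also have "card \<dots> = (\<Sum>j\<in>UNIV. card (S \<inter> triple j))"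
    by (rule card_UN_disjoint) (auto simp: triple_def)
  finally show ?thesis .
qed

lemma good_iff:
  fixes S :: "'k::finite pt set"
  shows "good S \<longleftrightarrow> S \<subseteq> Xset \<and> (\<forall>j. card (S \<inter> triple j) = 2) \<and> S \<noteq> range Apt \<union> range Cpt"
proof -
  have full_iff: "triple j \<subseteq> S \<longleftrightarrow> card (S \<inter> triple j) = 3" for j
    by (cases "Apt j \<in> S"; cases "Bpt j \<in> S"; cases "Cpt j \<in> S")
      (simp_all add: triple_def Int_insert_right)
  have le3: "card (S \<inter> triple j) \<le> 3" for j
    using card_mono[of "triple j" "S \<inter> triple j"] by (simp add: triple_def)
  show ?thesis
  proof (cases "S \<subseteq> Xset")
    case True
    then have card_S: "card S = (\<Sum>j\<in>UNIV. card (S \<inter> triple j))"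
      by (rule card_subset_Xset)
    have "card S = 2 * CARD('k) \<and> (\<forall>j. \<not> triple j \<subseteq> S) \<longleftrightarrow> (\<forall>j. card (S \<inter> triple j) = 2)"
    proof
      assume "card S = 2 * CARD('k) \<and> (\<forall>j. \<not> triple j \<subseteq> S)"
      then have le2: "card (S \<inter> triple j) \<le> 2" for j
        using le3[of j] full_iff[of j] by fastforce
      have sum2: "(\<Sum>j\<in>UNIV. card (S \<inter> triple j)) = (\<Sum>j\<in>(UNIV :: 'k set). 2)"
        using \<open>card S = 2 * CARD('k) \<and> _\<close> card_S by simp
      show "\<forall>j. card (S \<inter> triple j) = 2"
        using sum_mono_inv[OF sum2] le2 by simp
    qed (use card_S full_iff in auto)
    then show ?thesis
      using True by (auto simp: good_def triple_def)
  qed (auto simp: good_def)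
qed

lemma triple_Diff_singletonE:
  assumes "card (S \<inter> triple j) = 2"
  obtains q where "triple j - S = {q}"
proof -
  consider "Apt j \<notin> S" "Bpt j \<in> S" "Cpt j \<in> S" | "Apt j \<in> S" "Bpt j \<notin> S" "Cpt j \<in> S"
    | "Apt j \<in> S" "Bpt j \<in> S" "Cpt j \<notin> S"
    using assms card_Int_triple_eq_2_iff by blast
  then show ?thesis
  proof cases
    case 1
    then show ?thesis
      by (intro that[of "Apt j"]) (auto simp: triple_def)
  next
    case 2
    then show ?thesis
      by (intro that[of "Bpt j"]) (auto simp: triple_def)
  next
    case 3
    then show ?thesis
      by (intro that[of "Cpt j"]) (auto simp: triple_def)
  qed
qed

lemma span_eq_UNIV_if_two_per_triple:
  fixes S :: "'k::finite pt set"
  assumes two: "\<forall>j. card (S \<inter> triple j) = 2"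
  shows "span S = UNIV"
proof (rule ccontr)
  assume "span S \<noteq> UNIV"
  then obtain w where "w \<noteq> 0" and "\<forall>x\<in>span S. inner w x = 0"
    using span_not_UNIV_orthogonal by blast
  then have w: "\<forall>x\<in>S. inner w x = 0"
    by (simp add: span_base)
  obtain \<alpha> \<gamma> where w_eq: "w = (\<alpha>, \<gamma>)"
    by fastforce
  define \<sigma> where "\<sigma> = (\<Sum>i\<in>UNIV. \<alpha> $ i) + (\<Sum>i\<in>UNIV. \<gamma> $ i)"
  have at_B: "\<alpha> $ j + \<gamma> $ j = 2 * \<sigma>" if "Bpt j \<in> S" for j
    using w that inner_Bpt[of \<alpha> \<gamma> j] Bpt_denominator_pos[where 'k='k] by (simp add: w_eq \<sigma>_def)
  have at_A: "\<alpha> $ j = 0" if "Apt j \<in> S" for j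
    using w that inner_Apt[of \<alpha> \<gamma> j] by (simp add: w_eq)
  have at_C: "\<gamma> $ j = 0" if "Cpt j \<in> S" for j
    using w that inner_Cpt[of \<alpha> \<gamma> j] by (simp add: w_eq)
  have pair_sum: "\<alpha> $ j + \<gamma> $ j = (if Bpt j \<in> S then 2 * \<sigma> else 0)"
    and pair_zero: "\<alpha> $ j = 0 \<or> \<gamma> $ j = 0" for j
    using two[rule_format, of j] at_A[of j] at_B[of j] at_C[of j]
    unfolding card_Int_triple_eq_2_iff by auto
  define m where "m = card {j. Bpt j \<in> S}"
  have "\<sigma> = (\<Sum>j\<in>UNIV. \<alpha> $ j + \<gamma> $ j)"
    by (simp add: \<sigma>_def sum.distrib)
  also have "\<dots> = (\<Sum>j\<in>{j. Bpt j \<in> S}. 2 * \<sigma>)"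
    by (simp add: pair_sum sum.If_cases)
  also have "\<dots> = 2 * \<sigma> * m"
    by (simp add: m_def)
  finally have "\<sigma> * (1 - 2 * real m) = 0"
    by (simp add: algebra_simps)
  moreover have "2 * real m \<noteq> 1"
    by (metis of_nat_eq_1_iff of_nat_mult of_nat_numeral odd_one even_mult_iff even_numeral)
  ultimately have "\<sigma> = 0"
    by simp
  then have "\<alpha> $ j = 0 \<and> \<gamma> $ j = 0" for j
    using pair_sum[of j] pair_zero[of j] by (auto split: if_splits)
  then have "w = 0"
    by (simp add: w_eq vec_eq_iff zero_prod_def)
  with \<open>w \<noteq> 0\<close> show False ..
qed

lemma affine_independent_if_two_per_triple:
  fixes S :: "'k::finite pt set"
  assumes "S \<subseteq> Xset" and "\<forall>j. card (S \<inter> triple j) = 2"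
  shows "\<not> affine_dependent S"
proof -
  have "finite S"
    using assms(1) finite_Xset by (rule finite_subset)
  moreover have "card S = DIM('k pt)"
    using card_subset_Xset[OF assms(1)] assms(2) by simp
  ultimately have "independent S"
    by (intro card_le_dim_spanning[of S UNIV])
      (simp_all add: span_eq_UNIV_if_two_per_triple[OF assms(2)])
  then show ?thesis
    using affine_dependent_imp_dependent by blast
qed

lemma affine_independent_if_good:
  fixes S :: "'k::finite pt set"
  assumes "good S"
  shows "\<not> affine_dependent S"
  using assms affine_independent_if_two_per_triple unfolding good_iff by blast

lemma face_of_Delta0_if_no_Bpt:
  fixes T :: "'k::finite pt set"
  assumes "T \<subseteq> Xset" and "\<forall>j. Bpt j \<notin> T"
  shows "convex hull T face_of Delta0"
proof -
  have "(range Apt \<union> range Cpt) \<inter> triple j = {Apt j, Cpt j}" for j :: 'k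
    by (auto simp: triple_def)
  then have "\<not> affine_dependent (range Apt \<union> range Cpt :: 'k pt set)"
    by (intro affine_independent_if_two_per_triple) (auto simp: Xset_def)
  moreover have "T \<subseteq> range Apt \<union> range Cpt"
    using assms by (auto simp: Xset_def)
  ultimately show ?thesis
    unfolding Delta0_def using face_of_convex_hull_affine_independent by blast
qed

lemma inner_axis_minus_axis:
  fixes j :: "'k::finite"
  defines "w \<equiv> (axis j 1, - axis j 1) :: 'k pt"
  shows "inner w (Apt j) * inner w (Cpt j) < 0"
    and "\<forall>v\<in>Xset - {Apt j, Cpt j}. inner w v = 0"
proof -
  have "inner w (Bpt i) = 0" for i
    by (simp add: w_def inner_Bpt sum_negf axis_def)
  moreover have "inner w (Apt i) = 0" "inner w (Cpt i) = 0" if "i \<noteq> j" for i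
    using that by (simp_all add: w_def inner_Apt inner_Cpt axis_def)
  ultimately have "inner w v = 0" if "v \<in> triple i" "v \<noteq> Apt j" "v \<noteq> Cpt j" for i v
    using that by (cases "i = j") (auto simp: triple_def)
  then show "\<forall>v\<in>Xset - {Apt j, Cpt j}. inner w v = 0"
    by (auto simp: Xset_eq_UN_triple)
  show "inner w (Apt j) * inner w (Cpt j) < 0"
    by (simp add: w_def inner_Apt inner_Cpt)
qed

lemma exists_functional_vanishing_off_triple:
  fixes S :: "'k::finite pt set"
  assumes X: "S \<subseteq> Xset" and two: "\<forall>i. card (S \<inter> triple i) = 2"
    and B: "Bpt j' \<in> S" "j' \<noteq> j"
    and neg: "t + s < 0"
  shows "\<exists>w. (\<forall>v\<in>S - triple j. inner w v = 0)
           \<and> inner w (Apt j) = t \<and> inner w (Cpt j) = s \<and> inner w (Bpt j) > 0"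
proof -
  define I where "I = {i. i \<noteq> j \<and> Bpt i \<in> S}"
  define m where "m = card I"
  have "j' \<in> I"
    using B by (simp add: I_def)
  then have "m \<ge> 1"
    unfolding m_def by (metis One_nat_def Suc_leI card_gt_0_iff empty_iff finite)
  \<comment> \<open>\<open>\<sigma>\<close> is the coordinate sum of the functional; vanishing at the points \<open>B\<^sub>i\<close>, \<open>i \<in> I\<close>,
    forces \<open>\<sigma> = t + s + 2\<sigma>m\<close>.\<close>
  define \<sigma> where "\<sigma> = (t + s) / (1 - 2 * real m)"
  have \<sigma>_pos: "\<sigma> > 0"
    using \<open>m \<ge> 1\<close> neg by (simp add: \<sigma>_def divide_neg_neg)
  define \<alpha> :: "real^'k" where "\<alpha> = (\<chi> i. if i = j then t else if Apt i \<in> S then 0 else 2 * \<sigma>)"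
  define \<gamma> :: "real^'k" where "\<gamma> = (\<chi> i. if i = j then s else if Cpt i \<in> S then 0 else 2 * \<sigma>)"
  have pair_sum: "\<alpha> $ i + \<gamma> $ i = (if i = j then t + s else 0) + (if i \<in> I then 2 * \<sigma> else 0)" for i
    using two[rule_format, of i] unfolding card_Int_triple_eq_2_iff by (auto simp: \<alpha>_def \<gamma>_def I_def)
  have total: "(\<Sum>i\<in>UNIV. \<alpha> $ i) + (\<Sum>i\<in>UNIV. \<gamma> $ i) = \<sigma>"
  proof -
    have "(\<Sum>i\<in>UNIV. \<alpha> $ i) + (\<Sum>i\<in>UNIV. \<gamma> $ i) = t + s + (\<Sum>i\<in>I. 2 * \<sigma>)"
      by (simp add: sum.distrib[symmetric] pair_sum sum.distrib sum.If_cases)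
    also have "\<dots> = t + s + 2 * \<sigma> * m"
      by (simp add: m_def)
    also have "\<dots> = \<sigma>"
      using \<open>m \<ge> 1\<close> by (simp add: \<sigma>_def field_simps)
    finally show ?thesis .
  qed
  have inner_B: "inner (\<alpha>, \<gamma>) (Bpt i) = (2 * \<sigma> - \<alpha> $ i - \<gamma> $ i) / (2 * (2 * real CARD('k) - 1))" for i
    by (simp only: inner_Bpt total)
  have "inner (\<alpha>, \<gamma>) v = 0" if v: "v \<in> S - triple j" for v
  proof -
    obtain i where "v \<in> triple i"
      using v X by (auto simp: Xset_eq_UN_triple)
    moreover have "i \<noteq> j"
      using v calculation by auto
    moreover have "\<alpha> $ i = (if Apt i \<in> S then 0 else 2 * \<sigma>)" "\<gamma> $ i = (if Cpt i \<in> S then 0 else 2 * \<sigma>)"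
      using \<open>i \<noteq> j\<close> by (simp_all add: \<alpha>_def \<gamma>_def)
    ultimately show ?thesis
      using v two[rule_format, of i, unfolded card_Int_triple_eq_2_iff]
      by (auto simp: triple_def inner_Apt inner_B inner_Cpt)
  qed
  moreover have "inner (\<alpha>, \<gamma>) (Bpt j) > 0"
  proof -
    have "\<sigma> * (1 - 2 * real m) = t + s"
      using \<open>m \<ge> 1\<close> by (simp add: \<sigma>_def)
    then have "2 * \<sigma> - \<alpha> $ j - \<gamma> $ j = \<sigma> * (1 + 2 * real m)"
      by (simp add: \<alpha>_def \<gamma>_def algebra_simps)
    then show ?thesis
      using \<sigma>_pos Bpt_denominator_pos[where 'k='k] by (simp add: inner_B)
  qed
  moreover have "inner (\<alpha>, \<gamma>) (Apt j) = t" "inner (\<alpha>, \<gamma>) (Cpt j) = s"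
    by (simp_all add: inner_Apt inner_Cpt \<alpha>_def \<gamma>_def)
  ultimately show ?thesis
    by blast
qed

lemma exists_functional_separating_pair:
  fixes S :: "'k::finite pt set"
  assumes X: "S \<subseteq> Xset" and two: "\<forall>i. card (S \<inter> triple i) = 2"
    and uv: "u \<in> triple j" "v \<in> triple j" "u \<noteq> v"
    and B: "Bpt j' \<in> S" "Bpt j \<in> {u, v} \<Longrightarrow> j' \<noteq> j"
  shows "\<exists>w. inner w u * inner w v < 0 \<and> (\<forall>x\<in>(S - triple j) \<union> (triple j - {u, v}). inner w x = 0)"
proof -
  have swap: "inner w u * inner w v = inner w a * inner w b" if "{u, v} = {a, b}" for w a b
    using that by (metis doubleton_eq_iff mult.commute)
  consider "{u, v} = {Apt j, Cpt j}" | "{u, v} = {Bpt j, Cpt j}" | "{u, v} = {Apt j, Bpt j}"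
    using uv by (auto simp: triple_def)
  then show ?thesis
  proof cases
    case 1
    define w :: "'k pt" where "w = (axis j 1, - axis j 1)"
    have w: "inner w (Apt j) * inner w (Cpt j) < 0" "\<forall>x\<in>Xset - {Apt j, Cpt j}. inner w x = 0"
      using inner_axis_minus_axis[of j] unfolding w_def by blast+
    have "(S - triple j) \<union> (triple j - {u, v}) \<subseteq> Xset - {Apt j, Cpt j}"
      using X 1 by (auto simp: triple_def Xset_def)
    then show ?thesis
    proof (intro exI conjI)
      show "inner w u * inner w v < 0"
        using swap[OF 1] w(1) by simp
    qed (use w(2) in blast)
  next
    case 2
    then obtain w where "\<forall>x\<in>S - triple j. inner w x = 0" "inner w (Apt j) = 0"
      "inner w (Cpt j) = -1" "inner w (Bpt j) > 0"
      using exists_functional_vanishing_off_triple[OF X two, of j' j 0 "-1"] B by auto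
    moreover have "triple j - {u, v} = {Apt j}"
      using 2 by (auto simp: triple_def)
    ultimately show ?thesis
      using swap[OF 2, of w] by (intro exI[of _ w]) (auto simp: mult_pos_neg)
  next
    case 3
    then obtain w where "\<forall>x\<in>S - triple j. inner w x = 0" "inner w (Apt j) = -1"
      "inner w (Cpt j) = 0" "inner w (Bpt j) > 0"
      using exists_functional_vanishing_off_triple[OF X two, of j' j "-1" 0] B by auto
    moreover have "triple j - {u, v} = {Cpt j}"
      using 3 by (auto simp: triple_def)
    ultimately show ?thesis
      using swap[OF 3, of w] by (intro exI[of _ w]) (auto simp: mult_neg_pos)
  qed
qed

lemma good_flip:
  fixes S :: "'k::finite pt set"
  assumes good: "good S" and p: "p \<in> S \<inter> triple j" and q: "q \<in> triple j - S"
    and B: "Bpt j' \<in> S - {p}"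
  shows "good (insert q (S - {p}))"
proof -
  have X: "S \<subseteq> Xset" and two: "\<forall>i. card (S \<inter> triple i) = 2"
    using good by (auto simp: good_iff)
  have "card (insert q (S - {p}) \<inter> triple i) = 2" for i
  proof (cases "i = j")
    case True
    have "insert q (S - {p}) \<inter> triple j = insert q (S \<inter> triple j - {p})"
      using q by auto
    then show ?thesis
      using True p q two[rule_format, of j] by (simp add: triple_def)
  next
    case False
    then have "insert q (S - {p}) \<inter> triple i = S \<inter> triple i"
      using p q triple_disjoint[OF False] by auto
    then show ?thesis
      using two by simp
  qed
  moreover have "insert q (S - {p}) \<subseteq> Xset"
    using X q by (auto simp: Xset_eq_UN_triple)
  moreover have "insert q (S - {p}) \<noteq> range Apt \<union> range Cpt"
  proof
    assume "insert q (S - {p}) = range Apt \<union> range Cpt"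
    then have "Bpt j' \<in> range Apt \<union> range Cpt"
      using B by blast
    then show False
      by auto
  qed
  ultimately show ?thesis
    by (simp add: good_iff)
qed

lemma good_eq_flip:
  fixes S S' :: "'k::finite pt set"
  assumes good: "good S" "good S'" and p: "p \<in> S \<inter> triple j" and q: "q \<in> triple j - S"
    and sub: "S - {p} \<subseteq> S'" and ne: "S' \<noteq> S"
  shows "S' = insert q (S - {p})"
proof -
  have X: "S \<subseteq> Xset" "S' \<subseteq> Xset"
    and two: "\<forall>i. card (S \<inter> triple i) = 2" "\<forall>i. card (S' \<inter> triple i) = 2"
    using good by (simp_all add: good_iff)
  have fin: "finite S" "finite S'"
    using X finite_subset finite_Xset by blast+
  have card: "card S' = card S"
    using good by (simp add: good_def)
  have "card S > 0"
    using p fin(1) card_gt_0_iff by blast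
  then have "card (S' - (S - {p})) = 1"
    using p card fin sub by (simp add: card_Diff_subset)
  then obtain x where x: "S' - (S - {p}) = {x}"
    by (rule card_1_singletonE)
  then have S': "S' = insert x (S - {p})"
    using sub by auto
  have "x \<notin> S"
    using x S' ne p by auto
  obtain i where "x \<in> triple i"
    using X(2) S' by (auto simp: Xset_eq_UN_triple)
  have "i = j"
  proof (rule ccontr)
    assume "i \<noteq> j"
    then have "insert x (S \<inter> triple i) \<subseteq> S' \<inter> triple i"
      using S' p triple_disjoint[of i j] \<open>x \<in> triple i\<close> by auto
    then have "card (insert x (S \<inter> triple i)) \<le> 2"
      using two(2) card_mono[of "S' \<inter> triple i"] by (metis finite_Int fin(2))
    then show False
      using two(1) \<open>x \<notin> S\<close> fin(1) by simp
  qed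
  obtain q' where "triple j - S = {q'}"
    using two(1) by (meson triple_Diff_singletonE)
  then have "x = q"
    using q \<open>i = j\<close> \<open>x \<in> triple i\<close> \<open>x \<notin> S\<close> by auto
  then show ?thesis
    using S' by simp
qed

lemma convex_hull_Int_flip:
  fixes S :: "'k::finite pt set"
  assumes good: "good S" and p: "p \<in> S \<inter> triple j" and q: "q \<in> triple j - S"
    and B: "Bpt j' \<in> S - {p}"
  shows "convex hull S \<inter> convex hull (insert q (S - {p})) = convex hull (S - {p})"
proof
  have "p \<noteq> q" "Bpt j \<in> {p, q} \<Longrightarrow> j' \<noteq> j"
    using p q B by auto
  then obtain w where "inner w p * inner w q < 0"
      and "\<forall>x\<in>(S - triple j) \<union> (triple j - {p, q}). inner w x = 0"
    using exists_functional_separating_pair[of S p j q j'] good p q B by (auto simp: good_iff)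
  moreover have "S - {p} \<subseteq> (S - triple j) \<union> (triple j - {p, q})"
    using q by auto
  ultimately have "convex hull (insert p (S - {p})) \<inter> convex hull (insert q (S - {p})) \<subseteq> convex hull (S - {p})"
    by (intro convex_hull_insert_Int_convex_hull_insert_subset) auto
  then show "convex hull S \<inter> convex hull (insert q (S - {p})) \<subseteq> convex hull (S - {p})"
    using p by (simp add: insert_absorb)
qed (meson Diff_subset hull_mono subset_insertI Int_greatest)

lemma convex_hull_eq_flip:
  fixes S S' :: "'k::finite pt set"
  assumes good: "good S" "good S'" and p: "p \<in> S \<inter> triple j" and q: "q \<in> triple j - S"
    and face: "convex hull (S - {p}) face_of convex hull S'"
    and ne: "convex hull S' \<noteq> convex hull S"
  shows "convex hull S' = convex hull (insert q (S - {p}))"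
proof -
  have indep: "\<not> affine_dependent S" "\<not> affine_dependent S'"
    using good affine_independent_if_good by blast+
  obtain T where T: "T \<subseteq> S'" "convex hull (S - {p}) = convex hull T"
    using face face_of_convex_hull_affine_independent[OF indep(2)] by blast
  have "\<not> affine_dependent (S - {p})" "\<not> affine_dependent T"
    using indep T(1) affine_dependent_subset[of "S - {p}" S] affine_dependent_subset[of T S'] by auto
  then have "S - {p} = T"
    using T(2) by (rule affine_independent_eq_if_convex_hull_eq)
  moreover have "S' \<noteq> S"
    using ne by auto
  ultimately have "S' = insert q (S - {p})"
    using good_eq_flip[OF good p q] T(1) by simp
  then show ?thesis
    by simp
qed

lemma codim_one_face_of_good_simplexE:
  fixes S F :: "'k::finite pt set"
  assumes good: "good S" and F: "F face_of convex hull S"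
    and dim: "aff_dim F = 2 * int CARD('k) - 2" and not_Delta0: "\<not> F face_of Delta0"
  obtains p j q j' where "p \<in> S \<inter> triple j" "q \<in> triple j - S" "Bpt j' \<in> S - {p}"
    "F = convex hull (S - {p})"
proof -
  have X: "S \<subseteq> Xset" and two: "\<forall>j. card (S \<inter> triple j) = 2"
    using good by (simp_all add: good_iff)
  obtain p where p: "p \<in> S" and F_eq: "F = convex hull (S - {p})"
    using face_of_convex_hull_affine_independent_codim_one[OF affine_independent_if_good[OF good] F]
      good dim by (auto simp: good_def)
  obtain j' where "Bpt j' \<in> S - {p}"
    using not_Delta0 face_of_Delta0_if_no_Bpt[of "S - {p}"] X F_eq by blast
  moreover obtain j where "p \<in> S \<inter> triple j"
    using X p by (auto simp: Xset_eq_UN_triple)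
  moreover obtain q where "triple j - S = {q}"
    using two by (meson triple_Diff_singletonE)
  ultimately show thesis
    using that F_eq by blast
qed

theorem mainTheorem7:
  fixes S1 F :: "('k::finite) pt set"
  assumes "CARD('k) \<ge> 2"
    and "good S1"
    and "F face_of convex hull S1"
    and "aff_dim F = 2 * int CARD('k) - 2"
    and "\<not> F face_of Delta0"
  shows "\<exists>S2. (good S2 \<and> convex hull S2 \<noteq> convex hull S1 \<and> F face_of convex hull S2)
           \<and> (\<forall>S. good S \<and> convex hull S \<noteq> convex hull S1 \<and> F face_of convex hull S
                  \<longrightarrow> convex hull S = convex hull S2)
           \<and> convex hull S1 \<inter> convex hull S2 = convex hull (S1 \<inter> S2)"
proof -
  obtain p j q j' where p: "p \<in> S1 \<inter> triple j" and q: "q \<in> triple j - S1"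
    and B: "Bpt j' \<in> S1 - {p}" and F: "F = convex hull (S1 - {p})"
    using codim_one_face_of_good_simplexE[OF assms(2-5)] by blast
  define S2 where "S2 = insert q (S1 - {p})"
  have good2: "good S2"
    unfolding S2_def using assms(2) p q B by (rule good_flip)
  have indep: "\<not> affine_dependent S1" "\<not> affine_dependent S2"
    using assms(2) good2 by (simp_all add: affine_independent_if_good)
  have "S1 \<inter> S2 = S1 - {p}" and "S2 \<noteq> S1"
    using q by (auto simp: S2_def)
  show ?thesis
  proof (intro exI[of _ S2] conjI allI impI)
    show "convex hull S2 \<noteq> convex hull S1"
      using \<open>S2 \<noteq> S1\<close> indep affine_independent_eq_if_convex_hull_eq by blast
    show "F face_of convex hull S2"
      using F indep(2) face_of_convex_hull_affine_independent by (auto simp: S2_def)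
    show "convex hull S = convex hull S2"
      if "good S \<and> convex hull S \<noteq> convex hull S1 \<and> F face_of convex hull S" for S
      using convex_hull_eq_flip[OF assms(2) _ p q] that F by (simp add: S2_def)
    show "convex hull S1 \<inter> convex hull S2 = convex hull (S1 \<inter> S2)"
      using convex_hull_Int_flip[OF assms(2) p q B] \<open>S1 \<inter> S2 = S1 - {p}\<close> by (simp add: S2_def)
  qed (rule good2)
qed

end
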